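(* Let $(M,\pi)$ be a partial $H$-module with standard dilation $((\overline M,T_\pi),\varphi)$. (i) For any proper dilation $((N,T),\theta)$ of $M$, there is a unique surjective $H$-linear map $\Phi:N\to\overline M$ such that $T_\pi\circ\Phi=\Phi\circ T$ and $\Phi\circ\theta=\varphi$. (ii) The map $\Phi$ is injective (hence bijective) if and only if the dilation $((N,T),\theta)$ is minimal.
   Context: Throughout, $k$ is a field and $H$ is a Hopf algebra over $k$ with bijective antipode $S$ and Sweedler notation $\Delta(h)=h_{(1)}\otimes h_{(2)}$. A partial $H$-module is a vector space $M$ with linear $\pi:H\to\mathrm{End}_k(M)$ satisfying, for all $h,k\in H$: - $\pi(1_H)=\mathrm{id}$; - $\pi(h)\pi(k_{(1)})\pi(S(k_{(2)}))=\pi(hk_{(1)})\pi(S(k_{(2)}))$; - $\pi(h_{(1)})\pi(S(h_{(2)}))\pi(k)=\pi(h_{(1)})\pi(S(h_{(2)})k)$; - $\pi(h)\pi(S(k_{(1)}))\pi(k_{(2)})=\pi(hS(k_{(1)}))\pi(k_{(2)})$; - $\pi(S(h_{(1)}))\pi(h_{(2)})\pi(k)=\pi(S(h_{(1)}))\pi(h_{(2)}k)$. Morphisms are linear maps commuting with all $\pi(h)$. For a left $H$-module $N$ (action $\triangleright$) and linear projection $T$, put $T_h(x)=h_{(1)}\triangleright T(S(h_{(2)})\triangleright x)$. $T$ satisfies the c-condition if $T_h\circ T=T\circ T_h$ for all $h$; then $T(N)$ is a partial $H$-module via $\pi_T(h)(x)=T(h\triangleright x)$. A dilation of $(M,\pi)$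 is $((N,T),\theta)$ with $N$ a left $H$-module, $T$ a projection on $N$ satisfying the c-condition, and $\theta:M\to T(N)$ an isomorphism of partial $H$-modules onto $(T(N),\pi_T)$. It is proper if $N$ is generated as an $H$-module by $\theta(M)$. It is minimal if $N$ contains no nonzero $H$-submodule annihilated by $T$. Standard dilation: $\operatorname{Hom}_k(H,M)$ is a left $H$-module via $(h\triangleright f)(k)=f(kh)$. Set $\varphi(m)(h)=\pi(h)(m)$, $\overline M=H\triangleright\varphi(M)\subseteq\operatorname{Hom}_k(H,M)$, and $T_\pi(f)=\varphi(f(1_H))$. *)

theory Defs
  imports Complex_Main "HOL-Library.Function_Algebras"
begin

text \<open>An element of H (x) H is represented by a finite list of pairs (a_i,b_i),
  standing for the sum of the a_i (x) b_i.  Two such lists represent the same tensor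
  iff they agree under all products of linear functionals (this characterizes
  equality in the algebraic tensor product over a field).\<close>

definition tensor2_eq ::
  "('k::field \<Rightarrow> 'h::ab_group_add \<Rightarrow> 'h) \<Rightarrow> ('h \<times> 'h) list \<Rightarrow> ('h \<times> 'h) list \<Rightarrow> bool" where
  "tensor2_eq sc xs ys \<longleftrightarrow>
     (\<forall>f g. Vector_Spaces.linear sc (*) f \<and> Vector_Spaces.linear sc (*) g \<longrightarrow>
        (\<Sum>(a,b)\<leftarrow>xs. f a * g b) = (\<Sum>(a,b)\<leftarrow>ys. f a * g b))"

definition tensor3_eq ::
  "('k::field \<Rightarrow> 'h::ab_group_add \<Rightarrow> 'h) \<Rightarrow> ('h \<times> 'h \<times> 'h) list \<Rightarrow> ('h \<times> 'h \<times> 'h) list \<Rightarrow> bool" where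
  "tensor3_eq sc xs ys \<longleftrightarrow>
     (\<forall>f g u. Vector_Spaces.linear sc (*) f \<and> Vector_Spaces.linear sc (*) g \<and> Vector_Spaces.linear sc (*) u \<longrightarrow>
        (\<Sum>(a,b,c)\<leftarrow>xs. f a * g b * u c) = (\<Sum>(a,b,c)\<leftarrow>ys. f a * g b * u c))"

text \<open>H is a k-algebra: a ring_1 with a compatible k-vector space structure sc.
  Delta h is a list representing h_(1) (x) h_(2).\<close>

definition hopf_algebra ::
  "('k::field \<Rightarrow> 'h::ring_1 \<Rightarrow> 'h) \<Rightarrow> ('h \<Rightarrow> ('h \<times> 'h) list) \<Rightarrow> ('h \<Rightarrow> 'k) \<Rightarrow> ('h \<Rightarrow> 'h) \<Rightarrow> bool" where
  "hopf_algebra sc \<Delta> \<epsilon> S \<longleftrightarrow>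
     vector_space sc \<and>
     (\<forall>c x y. sc c (x * y) = sc c x * y \<and> sc c (x * y) = x * sc c y) \<and>
     \<comment> \<open>comultiplication: linear, coassociative\<close>
     (\<forall>x y. tensor2_eq sc (\<Delta> (x + y)) (\<Delta> x @ \<Delta> y)) \<and>
     (\<forall>c x. tensor2_eq sc (\<Delta> (sc c x)) (map (\<lambda>(a,b). (sc c a, b)) (\<Delta> x))) \<and>
     (\<forall>h. tensor3_eq sc
          (concat (map (\<lambda>(a,b). map (\<lambda>(a1,a2). (a1,a2,b)) (\<Delta> a)) (\<Delta> h)))
          (concat (map (\<lambda>(a,b). map (\<lambda>(b1,b2). (a,b1,b2)) (\<Delta> b)) (\<Delta> h)))) \<and>
     \<comment> \<open>counit\<close>
     Vector_Spaces.linear sc (*) \<epsilon> \<and>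
     (\<forall>h. (\<Sum>(a,b)\<leftarrow>\<Delta> h. sc (\<epsilon> a) b) = h) \<and>
     (\<forall>h. (\<Sum>(a,b)\<leftarrow>\<Delta> h. sc (\<epsilon> b) a) = h) \<and>
     \<comment> \<open>bialgebra: Delta and epsilon are algebra maps\<close>
     (\<forall>x y. tensor2_eq sc (\<Delta> (x * y))
          (concat (map (\<lambda>(a,b). map (\<lambda>(c,d). (a * c, b * d)) (\<Delta> y)) (\<Delta> x)))) \<and>
     tensor2_eq sc (\<Delta> 1) [(1,1)] \<and>
     (\<forall>x y. \<epsilon> (x * y) = \<epsilon> x * \<epsilon> y) \<and> \<epsilon> 1 = 1 \<and>
     \<comment> \<open>antipode, assumed bijective\<close>
     Vector_Spaces.linear sc sc S \<and>
     (\<forall>h. (\<Sum>(a,b)\<leftarrow>\<Delta> h. S a * b) = sc (\<epsilon> h) 1) \<and>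
     (\<forall>h. (\<Sum>(a,b)\<leftarrow>\<Delta> h. a * S b) = sc (\<epsilon> h) 1) \<and>
     bij S"

definition partial_module ::
  "('k::field \<Rightarrow> 'h::ring_1 \<Rightarrow> 'h) \<Rightarrow> ('h \<Rightarrow> ('h \<times> 'h) list) \<Rightarrow> ('h \<Rightarrow> 'h)
   \<Rightarrow> ('k \<Rightarrow> 'm::ab_group_add \<Rightarrow> 'm) \<Rightarrow> ('h \<Rightarrow> 'm \<Rightarrow> 'm) \<Rightarrow> bool" where
  "partial_module sc \<Delta> S scM \<pi> \<longleftrightarrow>
     vector_space scM \<and>
     \<comment> \<open>pi : H -> End_k(M) is k-linear\<close>
     (\<forall>h. Vector_Spaces.linear scM scM (\<pi> h)) \<and>
     (\<forall>x y m. \<pi> (x + y) m = \<pi> x m + \<pi> y m) \<and>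
     (\<forall>c x m. \<pi> (sc c x) m = scM c (\<pi> x m)) \<and>
     (\<forall>m. \<pi> 1 m = m) \<and>
     (\<forall>h k m. (\<Sum>(a,b)\<leftarrow>\<Delta> k. \<pi> h (\<pi> a (\<pi> (S b) m))) = (\<Sum>(a,b)\<leftarrow>\<Delta> k. \<pi> (h * a) (\<pi> (S b) m))) \<and>
     (\<forall>h k m. (\<Sum>(a,b)\<leftarrow>\<Delta> h. \<pi> a (\<pi> (S b) (\<pi> k m))) = (\<Sum>(a,b)\<leftarrow>\<Delta> h. \<pi> a (\<pi> (S b * k) m))) \<and>
     (\<forall>h k m. (\<Sum>(a,b)\<leftarrow>\<Delta> k. \<pi> h (\<pi> (S a) (\<pi> b m))) = (\<Sum>(a,b)\<leftarrow>\<Delta> k. \<pi> (h * S a) (\<pi> b m))) \<and>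
     (\<forall>h k m. (\<Sum>(a,b)\<leftarrow>\<Delta> h. \<pi> (S a) (\<pi> b (\<pi> k m))) = (\<Sum>(a,b)\<leftarrow>\<Delta> h. \<pi> (S a) (\<pi> (b * k) m)))"

definition h_module ::
  "('k::field \<Rightarrow> 'h::ring_1 \<Rightarrow> 'h) \<Rightarrow> ('k \<Rightarrow> 'n::ab_group_add \<Rightarrow> 'n) \<Rightarrow> ('h \<Rightarrow> 'n \<Rightarrow> 'n) \<Rightarrow> bool" where
  "h_module sc scN act \<longleftrightarrow>
     vector_space scN \<and>
     (\<forall>h. Vector_Spaces.linear scN scN (act h)) \<and>
     (\<forall>x y n. act (x + y) n = act x n + act y n) \<and>
     (\<forall>c x n. act (sc c x) n = scN c (act x n)) \<and>
     (\<forall>n. act 1 n = n) \<and>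
     (\<forall>x y n. act (x * y) n = act x (act y n))"

definition h_submodule ::
  "('k::field \<Rightarrow> 'n::ab_group_add \<Rightarrow> 'n) \<Rightarrow> ('h \<Rightarrow> 'n \<Rightarrow> 'n) \<Rightarrow> 'n set \<Rightarrow> bool" where
  "h_submodule scN act W \<longleftrightarrow> module.subspace scN W \<and> (\<forall>h x. x \<in> W \<longrightarrow> act h x \<in> W)"

definition is_projection :: "('k::field \<Rightarrow> 'n::ab_group_add \<Rightarrow> 'n) \<Rightarrow> ('n \<Rightarrow> 'n) \<Rightarrow> bool" where
  "is_projection scN T \<longleftrightarrow> Vector_Spaces.linear scN scN T \<and> (\<forall>x. T (T x) = T x)"

definition T_twist ::
  "('h \<Rightarrow> ('h \<times> 'h) list) \<Rightarrow> ('h \<Rightarrow> 'h) \<Rightarrow> ('h \<Rightarrow> 'n::ab_group_add \<Rightarrow> 'n) \<Rightarrow> ('n \<Rightarrow> 'n) \<Rightarrow> 'h \<Rightarrow> 'n \<Rightarrow> 'n" where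
  "T_twist \<Delta> S act T h x = (\<Sum>(a,b)\<leftarrow>\<Delta> h. act a (T (act (S b) x)))"

definition c_condition ::
  "('h \<Rightarrow> ('h \<times> 'h) list) \<Rightarrow> ('h \<Rightarrow> 'h) \<Rightarrow> ('h \<Rightarrow> 'n::ab_group_add \<Rightarrow> 'n) \<Rightarrow> ('n \<Rightarrow> 'n) \<Rightarrow> bool" where
  "c_condition \<Delta> S act T \<longleftrightarrow> (\<forall>h x. T_twist \<Delta> S act T h (T x) = T (T_twist \<Delta> S act T h x))"

definition is_dilation ::
  "('k::field \<Rightarrow> 'h::ring_1 \<Rightarrow> 'h) \<Rightarrow> ('h \<Rightarrow> ('h \<times> 'h) list) \<Rightarrow> ('h \<Rightarrow> 'h)
   \<Rightarrow> ('k \<Rightarrow> 'm::ab_group_add \<Rightarrow> 'm) \<Rightarrow> ('h \<Rightarrow> 'm \<Rightarrow> 'm)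
   \<Rightarrow> ('k \<Rightarrow> 'n::ab_group_add \<Rightarrow> 'n) \<Rightarrow> ('h \<Rightarrow> 'n \<Rightarrow> 'n) \<Rightarrow> ('n \<Rightarrow> 'n) \<Rightarrow> ('m \<Rightarrow> 'n) \<Rightarrow> bool" where
  "is_dilation sc \<Delta> S scM \<pi> scN act T \<theta> \<longleftrightarrow>
     h_module sc scN act \<and> is_projection scN T \<and> c_condition \<Delta> S act T \<and>
     Vector_Spaces.linear scM scN \<theta> \<and> bij_betw \<theta> UNIV (range T) \<and>
     (\<forall>h m. \<theta> (\<pi> h m) = T (act h (\<theta> m)))"

definition proper_dilation ::
  "('k::field \<Rightarrow> 'n::ab_group_add \<Rightarrow> 'n) \<Rightarrow> ('h \<Rightarrow> 'n \<Rightarrow> 'n) \<Rightarrow> ('m \<Rightarrow> 'n) \<Rightarrow> bool" where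
  "proper_dilation scN act \<theta> \<longleftrightarrow>
     (\<forall>W. h_submodule scN act W \<and> range \<theta> \<subseteq> W \<longrightarrow> W = UNIV)"

definition minimal_dilation ::
  "('k::field \<Rightarrow> 'n::ab_group_add \<Rightarrow> 'n) \<Rightarrow> ('h \<Rightarrow> 'n \<Rightarrow> 'n) \<Rightarrow> ('n \<Rightarrow> 'n) \<Rightarrow> bool" where
  "minimal_dilation scN act T \<longleftrightarrow>
     (\<forall>W. h_submodule scN act W \<and> T ` W \<subseteq> {0} \<longrightarrow> W = {0})"

text \<open>Hom_k(H,M) is modelled as functions H -> M (the relevant ones are k-linear);
  scalar multiplication pointwise, addition pointwise (Function_Algebras).\<close>

definition hom_scale :: "('k \<Rightarrow> 'm \<Rightarrow> 'm) \<Rightarrow> 'k \<Rightarrow> ('h \<Rightarrow> 'm) \<Rightarrow> ('h \<Rightarrow> 'm)" where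
  "hom_scale scM c f = (\<lambda>k. scM c (f k))"

definition hom_act :: "'h::times \<Rightarrow> ('h \<Rightarrow> 'm) \<Rightarrow> ('h \<Rightarrow> 'm)" where
  "hom_act h f = (\<lambda>k. f (k * h))"

definition std_phi :: "('h \<Rightarrow> 'm \<Rightarrow> 'm) \<Rightarrow> 'm \<Rightarrow> ('h \<Rightarrow> 'm)" where
  "std_phi \<pi> m = (\<lambda>h. \<pi> h m)"

definition Mbar :: "('k::field \<Rightarrow> 'm::ab_group_add \<Rightarrow> 'm) \<Rightarrow> ('h::times \<Rightarrow> 'm \<Rightarrow> 'm) \<Rightarrow> ('h \<Rightarrow> 'm) set" where
  "Mbar scM \<pi> = module.span (hom_scale scM) {hom_act h (std_phi \<pi> m) | h m. True}"

definition T_std :: "('h::one \<Rightarrow> 'm \<Rightarrow> 'm) \<Rightarrow> ('h \<Rightarrow> 'm) \<Rightarrow> ('h \<Rightarrow> 'm)" where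
  "T_std \<pi> f = std_phi \<pi> (f 1)"

definition dilation_comparison_map ::
  "('k::field \<Rightarrow> 'm::ab_group_add \<Rightarrow> 'm) \<Rightarrow> ('h::ring_1 \<Rightarrow> 'm \<Rightarrow> 'm)
   \<Rightarrow> ('k \<Rightarrow> 'n::ab_group_add \<Rightarrow> 'n) \<Rightarrow> ('h \<Rightarrow> 'n \<Rightarrow> 'n) \<Rightarrow> ('n \<Rightarrow> 'n) \<Rightarrow> ('m \<Rightarrow> 'n)
   \<Rightarrow> ('n \<Rightarrow> ('h \<Rightarrow> 'm)) \<Rightarrow> bool" where
  "dilation_comparison_map scM \<pi> scN act T \<theta> \<Phi> \<longleftrightarrow>
     Vector_Spaces.linear scN (hom_scale scM) \<Phi> \<and>
     (\<forall>h x. \<Phi> (act h x) = hom_act h (\<Phi> x)) \<and>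
     range \<Phi> = Mbar scM \<pi> \<and>
     (\<forall>x. T_std \<pi> (\<Phi> x) = \<Phi> (T x)) \<and>
     (\<forall>m. \<Phi> (\<theta> m) = std_phi \<pi> m)"

end

theory Submission
  imports Defs
begin

text \<open>The comparison map is forced: \<open>\<Phi>(x)(h) = \<Phi>(h \<triangleright> x)(1) = \<theta>\<^sup>-\<^sup>1(T(h \<triangleright> x))\<close>,
  and this formula does define an \<open>H\<close>-linear map with the required properties.
  Its image is an \<open>H\<close>-submodule containing \<open>\<phi>(M)\<close>, so it is \<open>M\<close>-bar when the dilation is proper.
  Its kernel consists of the \<open>x\<close> with \<open>T(h \<triangleright> x) = 0\<close> for all \<open>h\<close>, which is the largest
  \<open>H\<close>-submodule annihilated by \<open>T\<close>; so it vanishes exactly when the dilation is minimal.\<close>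

lemma vector_space_hom_scale:
  assumes "vector_space scM"
  shows "vector_space (hom_scale scM)"
proof -
  interpret M: vector_space scM by fact
  show ?thesis
    by unfold_locales
      (auto simp: hom_scale_def fun_eq_iff M.scale_right_distrib M.scale_left_distrib)
qed

lemma linear_hom_act:
  assumes "vector_space scM"
  shows "Vector_Spaces.linear (hom_scale scM) (hom_scale scM) (hom_act h)"
  using vector_space_hom_scale[OF assms]
  by (auto simp: Vector_Spaces.linear_iff hom_act_def hom_scale_def)

lemma hom_act_hom_act: "hom_act k (hom_act h f) = hom_act (k * h) f"
  for h k :: "'h::semigroup_mult"
  by (simp add: hom_act_def mult.assoc)

lemma hom_act_one: "hom_act (1::'h::monoid_mult) f = f"
  by (simp add: hom_act_def)

lemma hom_act_mem_Mbar:
  fixes f :: "'h::semigroup_mult \<Rightarrow> 'm::ab_group_add"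
  assumes "vector_space scM" and "f \<in> Mbar scM \<pi>"
  shows "hom_act k f \<in> Mbar scM \<pi>"
proof -
  interpret act_k: Vector_Spaces.linear "hom_scale scM" "hom_scale scM" "hom_act k"
    using linear_hom_act[OF assms(1)] .
  let ?G = "{hom_act h (std_phi \<pi> m) | h m. True}"
  have "hom_act k ` ?G \<subseteq> ?G"
    by (fastforce simp: hom_act_hom_act)
  then have "hom_act k ` act_k.vs1.span ?G \<subseteq> act_k.vs1.span ?G"
    by (simp add: act_k.span_image[symmetric] act_k.vs1.span_mono)
  then show ?thesis
    using assms(2) by (auto simp: Mbar_def)
qed

locale dilation_data =
  M: vector_space scM + N: vector_space scN
  for scM :: "'k::field \<Rightarrow> 'm::ab_group_add \<Rightarrow> 'm"
    and scN :: "'k \<Rightarrow> 'n::ab_group_add \<Rightarrow> 'n"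
    and \<pi> :: "'h::monoid_mult \<Rightarrow> 'm \<Rightarrow> 'm"
    and act :: "'h \<Rightarrow> 'n \<Rightarrow> 'n"
    and T :: "'n \<Rightarrow> 'n"
    and \<theta> :: "'m \<Rightarrow> 'n" +
  assumes linear_act: "Vector_Spaces.linear scN scN (act h)"
    and act_one: "act 1 x = x"
    and act_mult: "act (g * h) x = act g (act h x)"
    and linear_T: "Vector_Spaces.linear scN scN T"
    and linear_theta: "Vector_Spaces.linear scM scN \<theta>"
    and inj_theta: "inj \<theta>"
    and range_theta: "range \<theta> = range T"
    and pi_one: "\<pi> 1 m = m"
    and theta_pi: "\<theta> (\<pi> h m) = T (act h (\<theta> m))"
begin

sublocale Hom: vector_space "hom_scale scM"
  by (rule vector_space_hom_scale) unfold_locales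

interpretation act: Vector_Spaces.linear scN scN "act h" for h
  by (rule linear_act)

interpretation T: Vector_Spaces.linear scN scN T
  by (rule linear_T)

interpretation \<theta>: Vector_Spaces.linear scM scN \<theta>
  by (rule linear_theta)

definition comparison :: "'n \<Rightarrow> 'h \<Rightarrow> 'm" where
  "comparison x = (\<lambda>h. inv \<theta> (T (act h x)))"

lemma theta_comparison: "\<theta> (comparison x h) = T (act h x)"
  unfolding comparison_def by (metis range_theta rangeI f_inv_into_f)

lemma comparison_eqI: "\<theta> m = T (act h x) \<Longrightarrow> comparison x h = m"
  by (metis theta_comparison inj_theta injD)

lemma comparison_eq_zero_iff: "comparison x = 0 \<longleftrightarrow> (\<forall>h. T (act h x) = 0)"
proof -
  have "comparison x h = 0 \<longleftrightarrow> T (act h x) = 0" for h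
    using comparison_eqI[of 0 h x] theta_comparison[of x h] by auto
  then show ?thesis
    by (simp add: fun_eq_iff)
qed

lemma linear_comparison: "Vector_Spaces.linear scN (hom_scale scM) comparison"
proof -
  have "comparison (x + y) = comparison x + comparison y" for x y
    by (rule ext, rule comparison_eqI) (simp add: \<theta>.add theta_comparison act.add T.add)
  moreover have "comparison (scN c x) = hom_scale scM c (comparison x)" for c x
    by (rule ext, rule comparison_eqI)
      (simp add: hom_scale_def \<theta>.scale theta_comparison act.scale T.scale)
  ultimately show ?thesis
    by (simp add: Vector_Spaces.linear_iff N.vector_space_axioms Hom.vector_space_axioms)
qed

interpretation comparison: Vector_Spaces.linear scN "hom_scale scM" comparison
  by (rule linear_comparison)

lemma comparison_act: "comparison (act g x) = hom_act g (comparison x)"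
  unfolding hom_act_def by (rule ext, rule comparison_eqI) (simp add: theta_comparison act_mult)

lemma comparison_theta: "comparison (\<theta> m) = std_phi \<pi> m"
  unfolding std_phi_def by (rule ext, rule comparison_eqI) (simp add: theta_pi)

lemma T_std_comparison: "T_std \<pi> (comparison x) = comparison (T x)"
  unfolding T_std_def std_phi_def
  by (rule ext, rule sym, rule comparison_eqI) (simp add: theta_pi theta_comparison act_one)

lemma comparison_unique:
  assumes act_eq: "\<And>h x. \<Phi> (act h x) = hom_act h (\<Phi> x)"
    and T_eq: "\<And>x. T_std \<pi> (\<Phi> x) = \<Phi> (T x)"
    and theta_eq: "\<And>m. \<Phi> (\<theta> m) = std_phi \<pi> m"
  shows "\<Phi> = comparison"
proof (intro ext)
  fix x h
  obtain m where m: "\<theta> m = T (act h x)"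
    using range_theta by (metis rangeE rangeI)
  have "\<Phi> x h = \<Phi> (act h x) 1"
    by (simp add: act_eq hom_act_def)
  also have "\<dots> = T_std \<pi> (\<Phi> (act h x)) 1"
    by (simp add: T_std_def std_phi_def pi_one)
  also have "\<dots> = \<Phi> (\<theta> m) 1"
    by (simp add: T_eq m)
  also have "\<dots> = m"
    by (simp add: theta_eq std_phi_def pi_one)
  finally show "\<Phi> x h = comparison x h"
    using comparison_eqI[OF m] by simp
qed

lemma Mbar_subset_range_comparison: "Mbar scM \<pi> \<subseteq> range comparison"
  unfolding Mbar_def
proof (rule Hom.span_minimal)
  show "{hom_act h (std_phi \<pi> m) | h m. True} \<subseteq> range comparison"
    by (auto simp: comparison_act[symmetric] comparison_theta[symmetric])
  show "Hom.subspace (range comparison)"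
    by (rule comparison.subspace_image[OF N.subspace_UNIV])
qed

lemma range_comparison:
  assumes "proper_dilation scN act \<theta>"
  shows "range comparison = Mbar scM \<pi>"
proof
  let ?W = "comparison -` Mbar scM \<pi>"
  have "Hom.subspace (Mbar scM \<pi>)"
    unfolding Mbar_def by (rule Hom.subspace_span)
  then have "h_submodule scN act ?W"
    unfolding h_submodule_def
    by (simp add: comparison.subspace_vimage comparison_act hom_act_mem_Mbar[OF M.vector_space_axioms])
  moreover have "range \<theta> \<subseteq> ?W"
    by (auto simp: comparison_theta Mbar_def intro!: Hom.span_base exI[of _ 1] hom_act_one[symmetric])
  ultimately show "range comparison \<subseteq> Mbar scM \<pi>"
    using assms unfolding proper_dilation_def by blast
qed (rule Mbar_subset_range_comparison)

lemma inj_comparison_iff_minimal: "inj comparison \<longleftrightarrow> minimal_dilation scN act T"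
proof
  assume inj: "inj comparison"
  show "minimal_dilation scN act T"
    unfolding minimal_dilation_def
  proof (intro allI impI)
    fix W assume W: "h_submodule scN act W \<and> T ` W \<subseteq> {0}"
    then have "comparison x = 0" if "x \<in> W" for x
      using that by (auto simp: comparison_eq_zero_iff h_submodule_def)
    with inj W show "W = {0}"
      by (auto simp: comparison.inj_iff_eq_0 h_submodule_def N.subspace_0)
  qed
next
  assume minimal: "minimal_dilation scN act T"
  let ?K = "{x. comparison x = 0}"
  have "comparison (act h x) = 0" if "comparison x = 0" for h x
    using that by (simp add: comparison_act hom_act_def fun_eq_iff)
  then have "h_submodule scN act ?K"
    by (simp add: h_submodule_def comparison.subspace_kernel)
  moreover have "T ` ?K \<subseteq> {0}"
    by (auto simp: comparison_eq_zero_iff) (metis act_one)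
  ultimately have "?K = {0}"
    using minimal unfolding minimal_dilation_def by blast
  then show "inj comparison"
    by (auto simp: comparison.inj_iff_eq_0)
qed

end

lemma dilation_data_if_dilation:
  assumes "partial_module sc \<Delta> S scM \<pi>"
    and "is_dilation sc \<Delta> S scM \<pi> scN act T \<theta>"
  shows "dilation_data scM scN \<pi> act T \<theta>"
proof -
  have "vector_space scM" and "\<And>m. \<pi> 1 m = m"
    using assms(1) unfolding partial_module_def by simp_all
  moreover have "h_module sc scN act" and "is_projection scN T"
    and "Vector_Spaces.linear scM scN \<theta>" and "bij_betw \<theta> UNIV (range T)"
    and "\<And>h m. \<theta> (\<pi> h m) = T (act h (\<theta> m))"
    using assms(2) unfolding is_dilation_def by simp_all
  ultimately show ?thesis
    unfolding dilation_data_def dilation_data_axioms_def h_module_def is_projection_def bij_betw_def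
    by simp
qed

theorem mainTheorem10:
  fixes sc :: "'k::field \<Rightarrow> 'h::ring_1 \<Rightarrow> 'h"
    and \<Delta> :: "'h \<Rightarrow> ('h \<times> 'h) list" and \<epsilon> :: "'h \<Rightarrow> 'k" and S :: "'h \<Rightarrow> 'h"
    and scM :: "'k \<Rightarrow> 'm::ab_group_add \<Rightarrow> 'm" and \<pi> :: "'h \<Rightarrow> 'm \<Rightarrow> 'm"
    and scN :: "'k \<Rightarrow> 'n::ab_group_add \<Rightarrow> 'n" and act :: "'h \<Rightarrow> 'n \<Rightarrow> 'n"
    and T :: "'n \<Rightarrow> 'n" and \<theta> :: "'m \<Rightarrow> 'n"
  assumes "hopf_algebra sc \<Delta> \<epsilon> S"
    and "partial_module sc \<Delta> S scM \<pi>"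
    and "is_dilation sc \<Delta> S scM \<pi> scN act T \<theta>"
    and "proper_dilation scN act \<theta>"
  shows "(\<exists>!\<Phi>. dilation_comparison_map scM \<pi> scN act T \<theta> \<Phi>) \<and>
         (\<forall>\<Phi>. dilation_comparison_map scM \<pi> scN act T \<theta> \<Phi> \<longrightarrow>
                (inj \<Phi> \<longleftrightarrow> minimal_dilation scN act T))"
proof -
  interpret dilation_data scM scN \<pi> act T \<theta>
    using assms(2,3) by (rule dilation_data_if_dilation)
  have is_comparison: "dilation_comparison_map scM \<pi> scN act T \<theta> \<Phi> \<longleftrightarrow> \<Phi> = comparison" for \<Phi>
  proof
    assume "dilation_comparison_map scM \<pi> scN act T \<theta> \<Phi>"
    then show "\<Phi> = comparison"
      unfolding dilation_comparison_map_def by (intro comparison_unique) simp_all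
  next
    assume "\<Phi> = comparison"
    then show "dilation_comparison_map scM \<pi> scN act T \<theta> \<Phi>"
      unfolding dilation_comparison_map_def
      by (simp add: linear_comparison comparison_act range_comparison[OF assms(4)]
          T_std_comparison comparison_theta)
  qed
  show ?thesis
    by (simp add: is_comparison inj_comparison_iff_minimal)
qed

end
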